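(* Let $G$ be a finite group. There exists a (non-unique) map of operads $\mathcal{SM}_{\varnothing}\to\varepsilon^*\mathscr{P}$, and any such map is a levelwise $(G\times\Sigma_\bullet)$-equivalence: for every $n$ and every subgroup $\Lambda\subseteq G\times\Sigma_n$, the induced functor on $\Lambda$-fixed subcategories is an equivalence of categories.
   Context: For a set $X$, $\widetilde X$ is the chaotic category on $X$ (exactly one morphism between any two objects), applied levelwise to operads. $\mathcal{SM}_\varnothing=\widetilde{\mathbb{F}(S)}$ where $\mathbb{F}$ is the free operad functor on symmetric sequences of $G$-sets and $S=(G\times\Sigma_0)/(G\times1)\sqcup(G\times\Sigma_2)/(G\times1)$ (this is the operad $\mathcal{SM}_{\mathbf{O}(\underline{\mathrm{triv}})}$ associated to the minimal indexing system, which has no nontrivial orbits). $\mathscr{P}=\widetilde{\Sigma_\bullet}$ is the nonequivariant permutativity (Barratt–Eccles) operad, the chaotification of the associative operad $\Sigma_\bullet$ with $\Sigma_n$ acting by left multiplication, and $\varepsilon^*\mathscr{P}$ is $\mathscr{P}$ with trivial $G$-action. *)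

theory Defs
  imports "HOL-Algebra.Sym_Groups"
begin

record ('o, 'm) category =
  Obj :: "'o set"
  Arr :: "'m set"
  Dom :: "'m \<Rightarrow> 'o"
  Cod :: "'m \<Rightarrow> 'o"
  Idm :: "'o \<Rightarrow> 'm"
  Cmp :: "'m \<Rightarrow> 'm \<Rightarrow> 'm"   (* Cmp C g f = g after f *)

record ('o, 'm, 'p, 'n) cfunctor =
  fo :: "'o \<Rightarrow> 'p"
  fm :: "'m \<Rightarrow> 'n"

definition is_functor :: "('o,'m) category \<Rightarrow> ('p,'n) category \<Rightarrow> ('o,'m,'p,'n) cfunctor \<Rightarrow> bool" where
  "is_functor C D F \<longleftrightarrow>
     (\<forall>x\<in>Obj C. fo F x \<in> Obj D) \<and>
     (\<forall>f\<in>Arr C. fm F f \<in> Arr D \<and> Dom D (fm F f) = fo F (Dom C f) \<and> Cod D (fm F f) = fo F (Cod C f)) \<and>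
     (\<forall>x\<in>Obj C. fm F (Idm C x) = Idm D (fo F x)) \<and>
     (\<forall>f\<in>Arr C. \<forall>g\<in>Arr C. Dom C g = Cod C f \<longrightarrow> fm F (Cmp C g f) = Cmp D (fm F g) (fm F f))"

definition id_functor :: "('o,'m,'o,'m) cfunctor" where
  "id_functor = \<lparr>fo = id, fm = id\<rparr>"

definition comp_functor :: "('p,'n,'q,'l) cfunctor \<Rightarrow> ('o,'m,'p,'n) cfunctor \<Rightarrow> ('o,'m,'q,'l) cfunctor" where
  "comp_functor H F = \<lparr>fo = fo H \<circ> fo F, fm = fm H \<circ> fm F\<rparr>"

definition iso_arr :: "('o,'m) category \<Rightarrow> 'm \<Rightarrow> bool" where
  "iso_arr C f \<longleftrightarrow> f \<in> Arr C \<and>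
     (\<exists>g\<in>Arr C. Dom C g = Cod C f \<and> Cod C g = Dom C f \<and>
        Cmp C g f = Idm C (Dom C f) \<and> Cmp C f g = Idm C (Cod C f))"

definition nat_iso :: "('o,'m) category \<Rightarrow> ('p,'n) category \<Rightarrow> ('o,'m,'p,'n) cfunctor
    \<Rightarrow> ('o,'m,'p,'n) cfunctor \<Rightarrow> ('o \<Rightarrow> 'n) \<Rightarrow> bool" where
  "nat_iso C D F1 F2 \<eta> \<longleftrightarrow>
     (\<forall>x\<in>Obj C. iso_arr D (\<eta> x) \<and> Dom D (\<eta> x) = fo F1 x \<and> Cod D (\<eta> x) = fo F2 x) \<and>
     (\<forall>f\<in>Arr C. Cmp D (\<eta> (Cod C f)) (fm F1 f) = Cmp D (fm F2 f) (\<eta> (Dom C f)))"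

definition cat_equiv :: "('o,'m) category \<Rightarrow> ('p,'n) category \<Rightarrow> ('o,'m,'p,'n) cfunctor \<Rightarrow> bool" where
  "cat_equiv C D F \<longleftrightarrow> is_functor C D F \<and>
     (\<exists>H \<eta> \<epsilon>. is_functor D C H \<and>
        nat_iso C C id_functor (comp_functor H F) \<eta> \<and>
        nat_iso D D (comp_functor F H) id_functor \<epsilon>)"

definition fixed_subcat :: "('o,'m) category \<Rightarrow> ('a \<Rightarrow> ('o,'m,'o,'m) cfunctor) \<Rightarrow> 'a set \<Rightarrow> ('o,'m) category" where
  "fixed_subcat C act L = C\<lparr> Obj := {x\<in>Obj C. \<forall>l\<in>L. fo (act l) x = x},
                            Arr := {f\<in>Arr C. \<forall>l\<in>L. fm (act l) f = f} \<rparr>"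

definition chaotic :: "'o set \<Rightarrow> ('o, 'o \<times> 'o) category" where
  "chaotic X = \<lparr>Obj = X, Arr = X \<times> X, Dom = fst, Cod = snd,
                Idm = (\<lambda>x. (x, x)), Cmp = (\<lambda>g f. (fst f, snd g))\<rparr>"

definition chaotic_fun :: "('o \<Rightarrow> 'p) \<Rightarrow> ('o, 'o \<times> 'o, 'p, 'p \<times> 'p) cfunctor" where
  "chaotic_fun h = \<lparr>fo = h, fm = map_prod h h\<rparr>"

(* Lev n = the category O(n); Act n l = action of l in G x Sigma_n;
   Gam_o / Gam_m = operadic composition gamma on objects / morphisms; Unit = unit object *)
record ('a, 'o, 'm) cat_operad =
  Lev :: "nat \<Rightarrow> ('o,'m) category"
  Act :: "nat \<Rightarrow> 'a \<Rightarrow> ('o,'m,'o,'m) cfunctor"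
  Gam_o :: "'o \<Rightarrow> 'o list \<Rightarrow> 'o"
  Gam_m :: "'m \<Rightarrow> 'm list \<Rightarrow> 'm"
  Unit :: "'o"

definition operad_map :: "('g,'b) monoid_scheme
    \<Rightarrow> ('g \<times> (nat \<Rightarrow> nat), 'o, 'm) cat_operad \<Rightarrow> ('g \<times> (nat \<Rightarrow> nat), 'p, 'n) cat_operad
    \<Rightarrow> (nat \<Rightarrow> ('o,'m,'p,'n) cfunctor) \<Rightarrow> bool" where
  "operad_map G Op Qp F \<longleftrightarrow>
     (\<forall>n. is_functor (Lev Op n) (Lev Qp n) (F n)) \<and>
     (\<forall>n. \<forall>l\<in>carrier (G \<times>\<times> sym_group n).
        (\<forall>x\<in>Obj (Lev Op n). fo (F n) (fo (Act Op n l) x) = fo (Act Qp n l) (fo (F n) x)) \<and>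
        (\<forall>f\<in>Arr (Lev Op n). fm (F n) (fm (Act Op n l) f) = fm (Act Qp n l) (fm (F n) f))) \<and>
     (\<forall>k js x xs. length js = k \<and> length xs = k \<and> x \<in> Obj (Lev Op k) \<and>
        (\<forall>i<k. xs ! i \<in> Obj (Lev Op (js ! i))) \<longrightarrow>
        fo (F (sum_list js)) (Gam_o Op x xs) = Gam_o Qp (fo (F k) x) (map2 (\<lambda>j y. fo (F j) y) js xs)) \<and>
     (\<forall>k js f fs. length js = k \<and> length fs = k \<and> f \<in> Arr (Lev Op k) \<and>
        (\<forall>i<k. fs ! i \<in> Arr (Lev Op (js ! i))) \<longrightarrow>
        fm (F (sum_list js)) (Gam_m Op f fs) = Gam_m Qp (fm (F k) f) (map2 (\<lambda>j g. fm (F j) g) js fs)) \<and>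
     fo (F 1) (Unit Op) = Unit Qp"

definition chaotic_operad :: "(nat \<Rightarrow> 'o set) \<Rightarrow> (nat \<Rightarrow> 'a \<Rightarrow> 'o \<Rightarrow> 'o)
    \<Rightarrow> ('o \<Rightarrow> 'o list \<Rightarrow> 'o) \<Rightarrow> 'o \<Rightarrow> ('a, 'o, 'o \<times> 'o) cat_operad" where
  "chaotic_operad A act gam u =
     \<lparr>Lev = (\<lambda>n. chaotic (A n)), Act = (\<lambda>n l. chaotic_fun (act n l)), Gam_o = gam,
      Gam_m = (\<lambda>f fs. (gam (fst f) (map fst fs), gam (snd f) (map snd fs))), Unit = u\<rparr>"

section \<open>The free operad F(S): trees with one nullary and one (Sigma_2-free) binary generator\<close>

datatype tr = Lf nat | Nul | Bin tr tr

fun leaves :: "tr \<Rightarrow> nat list" where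
  "leaves (Lf i) = [i]" | "leaves Nul = []" | "leaves (Bin a b) = leaves a @ leaves b"

fun relabel :: "(nat \<Rightarrow> nat) \<Rightarrow> tr \<Rightarrow> tr" where
  "relabel s (Lf i) = Lf (s i)" | "relabel s Nul = Nul" | "relabel s (Bin a b) = Bin (relabel s a) (relabel s b)"

fun subst_tr :: "(nat \<Rightarrow> tr) \<Rightarrow> tr \<Rightarrow> tr" where
  "subst_tr f (Lf i) = f i" | "subst_tr f Nul = Nul" | "subst_tr f (Bin a b) = Bin (subst_tr f a) (subst_tr f b)"

definition free_ar :: "nat \<Rightarrow> tr set" where
  "free_ar n = {t. distinct (leaves t) \<and> set (leaves t) = {1..n}}"

definition tr_off :: "tr list \<Rightarrow> nat \<Rightarrow> nat" where
  "tr_off ss i = sum_list (map (\<lambda>s. length (leaves s)) (take (i - 1) ss))"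

definition tr_gamma :: "tr \<Rightarrow> tr list \<Rightarrow> tr" where
  "tr_gamma t ss = subst_tr (\<lambda>i. relabel (\<lambda>r. tr_off ss i + r) (ss ! (i - 1))) t"

definition SM_empty :: "('g \<times> (nat \<Rightarrow> nat), tr, tr \<times> tr) cat_operad" where
  "SM_empty = chaotic_operad free_ar (\<lambda>n (g, \<sigma>). relabel \<sigma>) tr_gamma (Lf 1)"

(* Sigma_n represented by words w = [tau 1, ..., tau n]; the left multiplication sigma.tau is map sigma w *)
definition perm_ar :: "nat \<Rightarrow> nat list set" where
  "perm_ar n = {w. distinct w \<and> set w = {1..n}}"

definition w_off :: "nat list list \<Rightarrow> nat \<Rightarrow> nat" where
  "w_off ws i = sum_list (map length (take (i - 1) ws))"

(* associative operad composition: replace letter i of w by the shifted word w_i *)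
definition w_gamma :: "nat list \<Rightarrow> nat list list \<Rightarrow> nat list" where
  "w_gamma w ws = concat (map (\<lambda>i. map (\<lambda>r. w_off ws i + r) (ws ! (i - 1))) w)"

definition eps_P :: "('g \<times> (nat \<Rightarrow> nat), nat list, nat list \<times> nat list) cat_operad" where
  "eps_P = chaotic_operad perm_ar (\<lambda>n (g, \<sigma>). map \<sigma>) w_gamma [1]"

end

theory Submission
  imports Defs
begin

text \<open>Both operads are chaotifications, so a functor between their levels is determined by its
map on objects, the \<open>\<Lambda>\<close>-fixed subcategories are chaotic on the \<open>\<Lambda>\<close>-fixed sets, and a functor
between chaotic categories is an equivalence as soon as its source is nonempty whenever its
target is. Since \<open>\<Sigma>\<^sub>n\<close> acts freely on itself, \<open>\<P>(n)\<close> has \<open>\<Lambda>\<close>-fixed points only when \<open>\<Lambda>\<close> acts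
trivially on labels, and then every tree, e.g. a left comb, is fixed. Reading the leaves of a
tree from left to right, or from right to left, gives two different operad maps.\<close>

lemma is_functor_chaotic_iff:
  "is_functor (chaotic X) (chaotic Y) F \<longleftrightarrow>
     fo F ` X \<subseteq> Y \<and> (\<forall>f\<in>X \<times> X. fm F f = map_prod (fo F) (fo F) f)"
  unfolding is_functor_def chaotic_def by (auto simp: prod_eq_iff mem_Times_iff)

lemma is_functor_chaotic_restrict:
  assumes "is_functor (chaotic X) (chaotic Y) F" and "X' \<subseteq> X" and "fo F ` X' \<subseteq> Y'"
  shows "is_functor (chaotic X') (chaotic Y') F"
  using assms unfolding is_functor_chaotic_iff by blast

lemma chaotic_equiv:
  assumes F: "is_functor (chaotic X) (chaotic Y) F" and nonempty: "Y \<noteq> {} \<Longrightarrow> X \<noteq> {}"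
  shows "cat_equiv (chaotic X) (chaotic Y) F"
proof (cases "X = {}")
  case True
  with nonempty have "Y = {}" by blast
  let ?H = "\<lparr>fo = (\<lambda>y. undefined), fm = (\<lambda>f. undefined)\<rparr> :: ('b, 'b \<times> 'b, 'a, 'a \<times> 'a) cfunctor"
  have "is_functor (chaotic Y) (chaotic X) ?H"
    and "nat_iso (chaotic X) (chaotic X) id_functor (comp_functor ?H F) (\<lambda>x. undefined)"
    and "nat_iso (chaotic Y) (chaotic Y) (comp_functor F ?H) id_functor (\<lambda>x. undefined)"
    using True \<open>Y = {}\<close> by (simp_all add: is_functor_def nat_iso_def chaotic_def)
  with F show ?thesis unfolding cat_equiv_def by blast
next
  case False
  then obtain x0 where x0: "x0 \<in> X" by blast
  have Fo: "fo F ` X \<subseteq> Y" and Fm: "\<And>f. f \<in> X \<times> X \<Longrightarrow> fm F f = map_prod (fo F) (fo F) f"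
    using F unfolding is_functor_chaotic_iff by auto
  let ?H = "chaotic_fun (\<lambda>y. x0) :: ('b, 'b \<times> 'b, 'a, 'a \<times> 'a) cfunctor"
  have H: "is_functor (chaotic Y) (chaotic X) ?H"
    using x0 by (auto simp: is_functor_chaotic_iff chaotic_fun_def)
  have \<eta>: "nat_iso (chaotic X) (chaotic X) id_functor (comp_functor ?H F) (\<lambda>x. (x, x0))"
    using x0 unfolding nat_iso_def iso_arr_def chaotic_def id_functor_def comp_functor_def chaotic_fun_def
    by force
  have "fm F (x0, x0) = (fo F x0, fo F x0)" and "fo F x0 \<in> Y"
    using Fm[of "(x0, x0)"] Fo x0 by auto
  then have \<epsilon>: "nat_iso (chaotic Y) (chaotic Y) (comp_functor F ?H) id_functor (\<lambda>y. (fo F x0, y))"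
    unfolding nat_iso_def iso_arr_def chaotic_def id_functor_def comp_functor_def chaotic_fun_def
    by force
  show ?thesis unfolding cat_equiv_def using F H \<eta> \<epsilon> by blast
qed

lemma fixed_subcat_chaotic:
  "fixed_subcat (chaotic X) (\<lambda>l. chaotic_fun (a l)) L = chaotic {x\<in>X. \<forall>l\<in>L. a l x = x}"
  unfolding fixed_subcat_def chaotic_def chaotic_fun_def by auto

lemma permutes_fixing_list_eq_id:
  assumes "\<sigma> permutes set w" and "map \<sigma> w = w"
  shows "\<sigma> = id"
proof
  fix i
  show "\<sigma> i = id i"
  proof (cases "i \<in> set w")
    case True
    then obtain j where "j < length w" "w ! j = i" by (auto simp: in_set_conv_nth)
    then show ?thesis using nth_map[of j w \<sigma>] assms(2) by simp
  qed (use assms(1) permutes_not_in in auto)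
qed

lemma leaves_relabel: "leaves (relabel s t) = map s (leaves t)"
  by (induction t) auto

lemma relabel_id: "relabel id t = t"
  by (induction t) auto

lemma leaves_subst_tr: "leaves (subst_tr f t) = concat (map (\<lambda>i. leaves (f i)) (leaves t))"
  by (induction t) auto

lemma leaves_tr_gamma:
  assumes "set (leaves t) \<subseteq> {1..length ss}"
  shows "leaves (tr_gamma t ss) = w_gamma (leaves t) (map leaves ss)"
proof -
  have "tr_off ss i = w_off (map leaves ss) i" for i
    unfolding tr_off_def w_off_def by (simp add: take_map comp_def)
  moreover have "i - 1 < length ss" if "i \<in> set (leaves t)" for i
    using assms that by force
  ultimately show ?thesis
    unfolding tr_gamma_def w_gamma_def by (simp add: leaves_subst_tr leaves_relabel cong: map_cong)
qed

lemma rev_leaves_tr_gamma: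
  assumes "set (leaves t) \<subseteq> {1..length ss}"
  shows "rev (leaves (tr_gamma t ss)) = w_gamma (rev (leaves t)) (map (\<lambda>s. rev (leaves s)) ss)"
proof -
  have "tr_off ss i = w_off (map (\<lambda>s. rev (leaves s)) ss) i" for i
    unfolding tr_off_def w_off_def by (simp add: take_map comp_def)
  moreover have "i - 1 < length ss" if "i \<in> set (leaves t)" for i
    using assms that by force
  ultimately show ?thesis
    unfolding tr_gamma_def w_gamma_def
    by (simp add: leaves_subst_tr leaves_relabel rev_concat rev_map)
      (rule arg_cong[where f = concat], rule map_cong, auto simp: rev_map)
qed

fun comb :: "nat \<Rightarrow> tr" where
  "comb 0 = Nul" | "comb (Suc n) = Bin (comb n) (Lf (Suc n))"

lemma leaves_comb: "leaves (comb n) = [1..<Suc n]"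
  by (induction n) auto

lemma comb_in_free_ar: "comb n \<in> free_ar n"
  unfolding free_ar_def by (auto simp: leaves_comb)

lemma SM_empty_simps:
  "Lev SM_empty n = chaotic (free_ar n)"
  "Act SM_empty n = (\<lambda>(g, \<sigma>). chaotic_fun (relabel \<sigma>))"
  "Gam_o SM_empty = tr_gamma"
  "Gam_m SM_empty = (\<lambda>f fs. (tr_gamma (fst f) (map fst fs), tr_gamma (snd f) (map snd fs)))"
  "Unit SM_empty = Lf 1"
  by (auto simp: SM_empty_def chaotic_operad_def)

lemma eps_P_simps:
  "Lev eps_P n = chaotic (perm_ar n)"
  "Act eps_P n = (\<lambda>(g, \<sigma>). chaotic_fun (map \<sigma>))"
  "Gam_o eps_P = w_gamma"
  "Gam_m eps_P = (\<lambda>f fs. (w_gamma (fst f) (map fst fs), w_gamma (snd f) (map snd fs)))"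
  "Unit eps_P = [1]"
  by (auto simp: eps_P_def chaotic_operad_def)

lemma map2_ignore_fst: "length js = length xs \<Longrightarrow> map2 (\<lambda>j y. h y) js xs = map h xs"
  by (induction js xs rule: list_induct2) auto

lemma operad_map_SM_empty_eps_P_chaotic_fun:
  assumes arity: "\<And>n t. t \<in> free_ar n \<Longrightarrow> L t \<in> perm_ar n"
    and equivariant: "\<And>\<sigma> t. L (relabel \<sigma> t) = map \<sigma> (L t)"
    and gamma: "\<And>t ss. set (leaves t) \<subseteq> {1..length ss} \<Longrightarrow> L (tr_gamma t ss) = w_gamma (L t) (map L ss)"
    and unit: "L (Lf 1) = [1]"
  shows "operad_map G SM_empty eps_P (\<lambda>n. chaotic_fun L)"
  unfolding operad_map_def
proof (intro conjI allI ballI impI)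
  fix n
  show "is_functor (Lev SM_empty n) (Lev eps_P n) (chaotic_fun L)"
    using arity by (auto simp: SM_empty_simps eps_P_simps is_functor_chaotic_iff chaotic_fun_def)
next
  fix k js x xs
  assume "length js = k \<and> length xs = k \<and> x \<in> Obj (Lev SM_empty k) \<and>
    (\<forall>i<k. xs ! i \<in> Obj (Lev SM_empty (js ! i)))"
  then show "fo (chaotic_fun L) (Gam_o SM_empty x xs) =
      Gam_o eps_P (fo (chaotic_fun L) x) (map2 (\<lambda>j y. fo (chaotic_fun L) y) js xs)"
    by (simp add: SM_empty_simps eps_P_simps chaotic_def free_ar_def chaotic_fun_def gamma map2_ignore_fst)
next
  fix k js f fs
  assume "length js = k \<and> length fs = k \<and> f \<in> Arr (Lev SM_empty k) \<and>
    (\<forall>i<k. fs ! i \<in> Arr (Lev SM_empty (js ! i)))"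
  then show "fm (chaotic_fun L) (Gam_m SM_empty f fs) =
      Gam_m eps_P (fm (chaotic_fun L) f) (map2 (\<lambda>j g. fm (chaotic_fun L) g) js fs)"
    by (auto simp: SM_empty_simps eps_P_simps chaotic_def free_ar_def chaotic_fun_def gamma
        map2_ignore_fst)
qed (use unit in \<open>auto simp: SM_empty_simps eps_P_simps chaotic_fun_def equivariant split: prod.splits\<close>)

lemma operad_maps_SM_empty_eps_P_not_unique:
  "\<exists>F F'. operad_map G SM_empty eps_P F \<and> operad_map G SM_empty eps_P F' \<and>
     (\<exists>x\<in>Obj (Lev SM_empty 2). fo (F 2) x \<noteq> fo (F' 2) x)"
proof -
  have "operad_map G SM_empty eps_P (\<lambda>n. chaotic_fun leaves)"
    by (rule operad_map_SM_empty_eps_P_chaotic_fun)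
      (auto simp: free_ar_def perm_ar_def leaves_relabel leaves_tr_gamma)
  moreover have "operad_map G SM_empty eps_P (\<lambda>n. chaotic_fun (\<lambda>t. rev (leaves t)))"
    by (rule operad_map_SM_empty_eps_P_chaotic_fun)
      (auto simp: free_ar_def perm_ar_def leaves_relabel rev_leaves_tr_gamma rev_map)
  moreover have "Bin (Lf 1) (Lf 2) \<in> Obj (Lev SM_empty 2)"
    by (auto simp: SM_empty_simps chaotic_def free_ar_def)
  ultimately show ?thesis
    by (intro exI[of _ "\<lambda>n. chaotic_fun leaves"] exI[of _ "\<lambda>n. chaotic_fun (\<lambda>t. rev (leaves t))"])
      (auto simp: chaotic_fun_def intro!: bexI[of _ "Bin (Lf 1) (Lf 2)"])
qed

lemma fixed_free_ar_nonempty_if_fixed_perm_ar: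
  assumes "\<Lambda> \<subseteq> carrier (G \<times>\<times> sym_group n)"
    and "\<exists>w\<in>perm_ar n. \<forall>(g, \<sigma>)\<in>\<Lambda>. map \<sigma> w = w"
  shows "\<exists>t\<in>free_ar n. \<forall>(g, \<sigma>)\<in>\<Lambda>. relabel \<sigma> t = t"
proof -
  obtain w where w: "w \<in> perm_ar n" and fixed: "\<forall>(g, \<sigma>)\<in>\<Lambda>. map \<sigma> w = w"
    using assms(2) by blast
  have trivial_on_labels: "\<sigma> = id" if "(g, \<sigma>) \<in> \<Lambda>" for g \<sigma>
  proof (rule permutes_fixing_list_eq_id)
    show "\<sigma> permutes set w"
      using w that assms(1) by (auto simp: perm_ar_def sym_group_carrier)
    show "map \<sigma> w = w"
      using fixed that by blast
  qed
  then have "\<forall>(g, \<sigma>)\<in>\<Lambda>. relabel \<sigma> (comb n) = comb n"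
    by (auto dest: trivial_on_labels simp: relabel_id)
  then show ?thesis
    using comb_in_free_ar by blast
qed

lemma operad_map_SM_empty_eps_P_fixed_equiv:
  assumes F: "operad_map G SM_empty eps_P F" and \<Lambda>: "subgroup \<Lambda> (G \<times>\<times> sym_group n)"
  shows "cat_equiv (fixed_subcat (Lev SM_empty n) (Act SM_empty n) \<Lambda>)
                   (fixed_subcat (Lev eps_P n) (Act eps_P n) \<Lambda>) (F n)"
proof -
  define X where "X = {t\<in>free_ar n. \<forall>(g, \<sigma>)\<in>\<Lambda>. relabel \<sigma> t = t}"
  define Y where "Y = {w\<in>perm_ar n. \<forall>(g, \<sigma>)\<in>\<Lambda>. map \<sigma> w = w}"
  have sub: "\<Lambda> \<subseteq> carrier (G \<times>\<times> sym_group n)"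
    using \<Lambda> by (rule subgroup.subset)
  have level_functor: "is_functor (chaotic (free_ar n)) (chaotic (perm_ar n)) (F n)"
    using F by (simp add: operad_map_def SM_empty_simps eps_P_simps)
  have equivariant: "fo (F n) (relabel \<sigma> t) = map \<sigma> (fo (F n) t)"
    if "(g, \<sigma>) \<in> \<Lambda>" and "t \<in> free_ar n" for g \<sigma> t
    using F sub that unfolding operad_map_def SM_empty_simps eps_P_simps
    by (fastforce simp: chaotic_def chaotic_fun_def)
  have "fo (F n) ` X \<subseteq> Y"
    using level_functor equivariant by (fastforce simp: X_def Y_def is_functor_chaotic_iff)
  then have "is_functor (chaotic X) (chaotic Y) (F n)"
    using level_functor by (rule is_functor_chaotic_restrict[rotated 2]) (auto simp: X_def)
  moreover have "Y \<noteq> {} \<Longrightarrow> X \<noteq> {}"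
    using fixed_free_ar_nonempty_if_fixed_perm_ar[OF sub] by (auto simp: X_def Y_def)
  ultimately have "cat_equiv (chaotic X) (chaotic Y) (F n)"
    by (rule chaotic_equiv)
  then show ?thesis
    unfolding SM_empty_simps eps_P_simps X_def Y_def
    by (simp add: case_prod_unfold fixed_subcat_chaotic[where a = "\<lambda>l. relabel (snd l)"]
        fixed_subcat_chaotic[where a = "\<lambda>l. map (snd l)"])
qed

theorem proposition4p15:
  fixes G :: "('g, 'b) monoid_scheme"
  assumes "group G" and "finite (carrier G)"
  shows "(\<exists>F F'. operad_map G SM_empty eps_P F \<and> operad_map G SM_empty eps_P F' \<and>
             (\<exists>x\<in>Obj (Lev SM_empty 2). fo (F 2) x \<noteq> fo (F' 2) x))
       \<and> (\<forall>F. operad_map G SM_empty eps_P F \<longrightarrow>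
            (\<forall>n \<Lambda>. subgroup \<Lambda> (G \<times>\<times> sym_group n) \<longrightarrow>
               cat_equiv (fixed_subcat (Lev SM_empty n) (Act SM_empty n) \<Lambda>)
                         (fixed_subcat (Lev eps_P n) (Act eps_P n) \<Lambda>) (F n)))"
  using operad_maps_SM_empty_eps_P_not_unique operad_map_SM_empty_eps_P_fixed_equiv by blast

end
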